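(* Let $E$ be a contact Riemannian Lie algebroid with associated almost contact Riemannian structure $(F_E,\xi,\eta,g_E)$ and Levi-Civita connection $\nabla$ of $g_E$. Then $E$ is $K$-contact (i.e. $\xi$ is a Killing section) if and only if $\nabla_s\xi=-F_E(s)$ for every $s\in\Gamma(E)$.
   Context: A Lie algebroid $(E,\rho_E,[\cdot,\cdot]_E)$ over $M$ is a vector bundle with anchor $\rho_E:E\to TM$ and Lie bracket on $\Gamma(E)$ with $[s_1,fs_2]_E=f[s_1,s_2]_E+\rho_E(s_1)(f)s_2$. For a 1-form $\eta$, $(d_E\eta)(s_1,s_2)=\frac12\{\rho_E(s_1)(\eta(s_2))-\rho_E(s_2)(\eta(s_1))-\eta([s_1,s_2]_E)\}$. For $E$ of rank $2m+1$, an almost contact Riemannian structure $(F_E,\xi,\eta,g_E)$: endomorphism $F_E$, $\xi\in\Gamma(E)$, $\eta\in\Gamma(E^* )$, bundle metric $g_E$ with $F_E^2=-I_E+\eta\otimes\xi$, $\eta(\xi)=1$, $g_E(F_Es_1,F_Es_2)=g_E(s_1,s_2)-\eta(s_1)\eta(s_2)$; fundamental form $\Omega_E(s_1,s_2)=g_E(s_1,F_Es_2)$. $E$ is contact Riemannian if also $\eta\wedge(d_E\eta)^m$ vanishes nowhere and $d_E\eta=\Omega_E$. $\xi$ is Killing if $\rho_E(\xi)(g_E(s_1,s_2))-g_E([\xi,s_1]_E,s_2)-g_E(s_1,[\xi,s_2]_E)=0$ for all $s_1,s_2$; a contact Riemannian Lie algebroid with Killing $\xi$ is called $K$-contact. The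 Levi-Civita connection $\nabla$ is the unique $E$-connection ($\nabla_{fs}s'=f\nabla_ss'$, $\nabla_s(fs')=f\nabla_ss'+\rho_E(s)(f)s'$) that is torsion-free ($\nabla_{s_1}s_2-\nabla_{s_2}s_1=[s_1,s_2]_E$) and metric ($\rho_E(s)(g_E(s_1,s_2))=g_E(\nabla_ss_1,s_2)+g_E(s_1,\nabla_ss_2)$). *)

theory Defs
  imports "HOL-Analysis.Analysis"
begin

text \<open>
M is (the points of) a type 'm; A is the algebra of smooth functions on M.
E is a real vector bundle of rank r whose fibre over x is the linear subspace E x of
a finite dimensional real vector space 'v (every vector bundle embeds in a trivial one).
\<close>

definition fsmul :: "('m \<Rightarrow> real) \<Rightarrow> ('m \<Rightarrow> 'v::real_vector) \<Rightarrow> ('m \<Rightarrow> 'v)" where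
  "fsmul f s = (\<lambda>x. f x *\<^sub>R s x)"

definition sadd :: "('m \<Rightarrow> 'v::real_vector) \<Rightarrow> ('m \<Rightarrow> 'v) \<Rightarrow> ('m \<Rightarrow> 'v)" where
  "sadd s1 s2 = (\<lambda>x. s1 x + s2 x)"

definition smooth_function_algebra :: "('m \<Rightarrow> real) set \<Rightarrow> bool" where
  "smooth_function_algebra A \<longleftrightarrow>
     (\<forall>c. (\<lambda>x. c) \<in> A) \<and>
     (\<forall>f\<in>A. \<forall>h\<in>A. (\<lambda>x. f x + h x) \<in> A \<and> (\<lambda>x. f x * h x) \<in> A)"

definition vector_bundle ::
  "('m \<Rightarrow> real) set \<Rightarrow> nat \<Rightarrow> ('m \<Rightarrow> 'v::euclidean_space set) \<Rightarrow> ('m \<Rightarrow> 'v) set \<Rightarrow> bool" where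
  "vector_bundle A r E Gam \<longleftrightarrow>
     smooth_function_algebra A \<and>
     (\<forall>x. subspace (E x) \<and> dim (E x) = r) \<and>
     (\<forall>s\<in>Gam. \<forall>x. s x \<in> E x) \<and>
     (\<lambda>x. 0) \<in> Gam \<and>
     (\<forall>s1\<in>Gam. \<forall>s2\<in>Gam. sadd s1 s2 \<in> Gam) \<and>
     (\<forall>f\<in>A. \<forall>s\<in>Gam. fsmul f s \<in> Gam) \<and>
     (\<forall>x v. v \<in> E x \<longrightarrow> (\<exists>s\<in>Gam. s x = v))"

text \<open>Lie algebroid: anchor rho (rho s acts on functions as the vector field rho_E(s)) and bracket br.\<close>
definition lie_algebroid ::
  "('m \<Rightarrow> real) set \<Rightarrow> nat \<Rightarrow> ('m \<Rightarrow> 'v::euclidean_space set) \<Rightarrow> ('m \<Rightarrow> 'v) set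
   \<Rightarrow> (('m \<Rightarrow> 'v) \<Rightarrow> ('m \<Rightarrow> real) \<Rightarrow> ('m \<Rightarrow> real))
   \<Rightarrow> (('m \<Rightarrow> 'v) \<Rightarrow> ('m \<Rightarrow> 'v) \<Rightarrow> ('m \<Rightarrow> 'v)) \<Rightarrow> bool" where
  "lie_algebroid A r E Gam rho br \<longleftrightarrow>
     vector_bundle A r E Gam \<and>
     \<comment> \<open>rho(s) is a vector field: an R-linear derivation of the smooth functions\<close>
     (\<forall>s\<in>Gam. \<forall>f\<in>A. rho s f \<in> A) \<and>
     (\<forall>s\<in>Gam. \<forall>f\<in>A. \<forall>h\<in>A. \<forall>c::real.
        rho s (\<lambda>x. f x + h x) = (\<lambda>x. rho s f x + rho s h x) \<and>
        rho s (\<lambda>x. c * f x) = (\<lambda>x. c * rho s f x) \<and>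
        rho s (\<lambda>x. f x * h x) = (\<lambda>x. f x * rho s h x + h x * rho s f x)) \<and>
     \<comment> \<open>rho is a bundle map, i.e. C-infinity(M)-linear on sections\<close>
     (\<forall>s1\<in>Gam. \<forall>s2\<in>Gam. \<forall>h\<in>A. rho (sadd s1 s2) h = (\<lambda>x. rho s1 h x + rho s2 h x)) \<and>
     (\<forall>f\<in>A. \<forall>s\<in>Gam. \<forall>h\<in>A. rho (fsmul f s) h = (\<lambda>x. f x * rho s h x)) \<and>
     \<comment> \<open>Lie bracket on sections\<close>
     (\<forall>s1\<in>Gam. \<forall>s2\<in>Gam. br s1 s2 \<in> Gam) \<and>
     (\<forall>s1\<in>Gam. \<forall>s2\<in>Gam. \<forall>s3\<in>Gam. \<forall>c::real.
        br (sadd s1 s2) s3 = sadd (br s1 s3) (br s2 s3) \<and>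
        br (fsmul (\<lambda>x. c) s1) s2 = fsmul (\<lambda>x. c) (br s1 s2)) \<and>
     (\<forall>s1\<in>Gam. \<forall>s2\<in>Gam. br s1 s2 = fsmul (\<lambda>x. -1) (br s2 s1)) \<and>
     (\<forall>s1\<in>Gam. \<forall>s2\<in>Gam. \<forall>s3\<in>Gam.
        sadd (br s1 (br s2 s3)) (sadd (br s2 (br s3 s1)) (br s3 (br s1 s2))) = (\<lambda>x. 0)) \<and>
     \<comment> \<open>Leibniz rule\<close>
     (\<forall>s1\<in>Gam. \<forall>s2\<in>Gam. \<forall>f\<in>A.
        br s1 (fsmul f s2) = sadd (fsmul f (br s1 s2)) (fsmul (rho s1 f) s2))"

definition form1 :: "('m \<Rightarrow> 'v \<Rightarrow> real) \<Rightarrow> ('m \<Rightarrow> 'v) \<Rightarrow> ('m \<Rightarrow> real)" where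
  "form1 \<eta> s = (\<lambda>x. \<eta> x (s x))"

definition form2 :: "('m \<Rightarrow> 'v \<Rightarrow> 'v \<Rightarrow> real) \<Rightarrow> ('m \<Rightarrow> 'v) \<Rightarrow> ('m \<Rightarrow> 'v) \<Rightarrow> ('m \<Rightarrow> real)" where
  "form2 g s1 s2 = (\<lambda>x. g x (s1 x) (s2 x))"

text \<open>d_E eta with the paper's convention (factor 1/2).\<close>
definition dE1 ::
  "(('m \<Rightarrow> 'v) \<Rightarrow> ('m \<Rightarrow> real) \<Rightarrow> ('m \<Rightarrow> real)) \<Rightarrow> (('m \<Rightarrow> 'v) \<Rightarrow> ('m \<Rightarrow> 'v) \<Rightarrow> ('m \<Rightarrow> 'v))
   \<Rightarrow> ('m \<Rightarrow> 'v \<Rightarrow> real) \<Rightarrow> ('m \<Rightarrow> 'v) \<Rightarrow> ('m \<Rightarrow> 'v) \<Rightarrow> ('m \<Rightarrow> real)" where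
  "dE1 rho br \<eta> s1 s2 =
     (\<lambda>x. (1/2) * (rho s1 (form1 \<eta> s2) x - rho s2 (form1 \<eta> s1) x - form1 \<eta> (br s1 s2) x))"

definition fundamental_form ::
  "('m \<Rightarrow> 'v \<Rightarrow> 'v) \<Rightarrow> ('m \<Rightarrow> 'v \<Rightarrow> 'v \<Rightarrow> real) \<Rightarrow> ('m \<Rightarrow> 'v) \<Rightarrow> ('m \<Rightarrow> 'v) \<Rightarrow> ('m \<Rightarrow> real)" where
  "fundamental_form F g s1 s2 = (\<lambda>x. g x (s1 x) (F x (s2 x)))"

definition almost_contact_riemannian ::
  "('m \<Rightarrow> real) set \<Rightarrow> nat \<Rightarrow> ('m \<Rightarrow> 'v::euclidean_space set) \<Rightarrow> ('m \<Rightarrow> 'v) set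
   \<Rightarrow> ('m \<Rightarrow> 'v \<Rightarrow> 'v) \<Rightarrow> ('m \<Rightarrow> 'v) \<Rightarrow> ('m \<Rightarrow> 'v \<Rightarrow> real) \<Rightarrow> ('m \<Rightarrow> 'v \<Rightarrow> 'v \<Rightarrow> real) \<Rightarrow> bool" where
  "almost_contact_riemannian A m E Gam F \<xi> \<eta> g \<longleftrightarrow>
     vector_bundle A (2*m+1) E Gam \<and>
     \<comment> \<open>smoothness of the tensor fields\<close>
     \<xi> \<in> Gam \<and>
     (\<forall>s\<in>Gam. (\<lambda>x. F x (s x)) \<in> Gam) \<and>
     (\<forall>s\<in>Gam. form1 \<eta> s \<in> A) \<and>
     (\<forall>s1\<in>Gam. \<forall>s2\<in>Gam. form2 g s1 s2 \<in> A) \<and>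
     \<comment> \<open>fibrewise linear algebra\<close>
     (\<forall>x. \<forall>v\<in>E x. \<forall>w\<in>E x. \<forall>c::real.
        F x (v + w) = F x v + F x w \<and> F x (c *\<^sub>R v) = c *\<^sub>R F x v \<and> F x v \<in> E x \<and>
        \<eta> x (v + w) = \<eta> x v + \<eta> x w \<and> \<eta> x (c *\<^sub>R v) = c * \<eta> x v) \<and>
     \<comment> \<open>g_E is a bundle metric: fibrewise symmetric, bilinear, positive definite\<close>
     (\<forall>x. \<forall>u\<in>E x. \<forall>v\<in>E x. \<forall>w\<in>E x. \<forall>c::real.
        g x u v = g x v u \<and> g x (u + v) w = g x u w + g x v w \<and> g x (c *\<^sub>R u) w = c * g x u w) \<and>
     (\<forall>x. \<forall>v\<in>E x. v \<noteq> 0 \<longrightarrow> g x v v > 0) \<and>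
     \<comment> \<open>structure equations\<close>
     (\<forall>x. \<forall>v\<in>E x. F x (F x v) = - v + \<eta> x v *\<^sub>R \<xi> x) \<and>
     (\<forall>x. \<eta> x (\<xi> x) = 1) \<and>
     (\<forall>x. \<forall>v\<in>E x. \<forall>w\<in>E x. g x (F x v) (F x w) = g x v w - \<eta> x v * \<eta> x w)"

text \<open>The value at a point x of (eta wedge (d_E eta)^m)(s_0,...,s_2m), up to the nonzero
  normalising constant of the wedge product convention (irrelevant for nonvanishing).\<close>
definition eta_wedge_deta_pow ::
  "(('m \<Rightarrow> 'v) \<Rightarrow> ('m \<Rightarrow> real) \<Rightarrow> ('m \<Rightarrow> real)) \<Rightarrow> (('m \<Rightarrow> 'v) \<Rightarrow> ('m \<Rightarrow> 'v) \<Rightarrow> ('m \<Rightarrow> 'v))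
   \<Rightarrow> ('m \<Rightarrow> 'v \<Rightarrow> real) \<Rightarrow> nat \<Rightarrow> (nat \<Rightarrow> ('m \<Rightarrow> 'v)) \<Rightarrow> 'm \<Rightarrow> real" where
  "eta_wedge_deta_pow rho br \<eta> m ss x =
     (\<Sum>p | p permutes {..2*m}. real_of_int (sign p) * form1 \<eta> (ss (p 0)) x *
        (\<Prod>i<m. dE1 rho br \<eta> (ss (p (2*i+1))) (ss (p (2*i+2))) x))"

definition contact_riemannian_lie_algebroid ::
  "('m \<Rightarrow> real) set \<Rightarrow> nat \<Rightarrow> ('m \<Rightarrow> 'v::euclidean_space set) \<Rightarrow> ('m \<Rightarrow> 'v) set
   \<Rightarrow> (('m \<Rightarrow> 'v) \<Rightarrow> ('m \<Rightarrow> real) \<Rightarrow> ('m \<Rightarrow> real)) \<Rightarrow> (('m \<Rightarrow> 'v) \<Rightarrow> ('m \<Rightarrow> 'v) \<Rightarrow> ('m \<Rightarrow> 'v))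
   \<Rightarrow> ('m \<Rightarrow> 'v \<Rightarrow> 'v) \<Rightarrow> ('m \<Rightarrow> 'v) \<Rightarrow> ('m \<Rightarrow> 'v \<Rightarrow> real) \<Rightarrow> ('m \<Rightarrow> 'v \<Rightarrow> 'v \<Rightarrow> real) \<Rightarrow> bool" where
  "contact_riemannian_lie_algebroid A m E Gam rho br F \<xi> \<eta> g \<longleftrightarrow>
     lie_algebroid A (2*m+1) E Gam rho br \<and>
     almost_contact_riemannian A m E Gam F \<xi> \<eta> g \<and>
     (\<forall>x. \<exists>ss. (\<forall>i\<le>2*m. ss i \<in> Gam) \<and> eta_wedge_deta_pow rho br \<eta> m ss x \<noteq> 0) \<and>
     (\<forall>s1\<in>Gam. \<forall>s2\<in>Gam. dE1 rho br \<eta> s1 s2 = fundamental_form F g s1 s2)"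

definition killing_section ::
  "('m \<Rightarrow> 'v) set \<Rightarrow> (('m \<Rightarrow> 'v) \<Rightarrow> ('m \<Rightarrow> real) \<Rightarrow> ('m \<Rightarrow> real)) \<Rightarrow> (('m \<Rightarrow> 'v) \<Rightarrow> ('m \<Rightarrow> 'v) \<Rightarrow> ('m \<Rightarrow> 'v))
   \<Rightarrow> ('m \<Rightarrow> 'v \<Rightarrow> 'v \<Rightarrow> real) \<Rightarrow> ('m \<Rightarrow> 'v) \<Rightarrow> bool" where
  "killing_section Gam rho br g \<xi> \<longleftrightarrow>
     (\<forall>s1\<in>Gam. \<forall>s2\<in>Gam. \<forall>x.
        rho \<xi> (form2 g s1 s2) x - form2 g (br \<xi> s1) s2 x - form2 g s1 (br \<xi> s2) x = 0)"

definition K_contact ::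
  "('m \<Rightarrow> real) set \<Rightarrow> nat \<Rightarrow> ('m \<Rightarrow> 'v::euclidean_space set) \<Rightarrow> ('m \<Rightarrow> 'v) set
   \<Rightarrow> (('m \<Rightarrow> 'v) \<Rightarrow> ('m \<Rightarrow> real) \<Rightarrow> ('m \<Rightarrow> real)) \<Rightarrow> (('m \<Rightarrow> 'v) \<Rightarrow> ('m \<Rightarrow> 'v) \<Rightarrow> ('m \<Rightarrow> 'v))
   \<Rightarrow> ('m \<Rightarrow> 'v \<Rightarrow> 'v) \<Rightarrow> ('m \<Rightarrow> 'v) \<Rightarrow> ('m \<Rightarrow> 'v \<Rightarrow> real) \<Rightarrow> ('m \<Rightarrow> 'v \<Rightarrow> 'v \<Rightarrow> real) \<Rightarrow> bool" where
  "K_contact A m E Gam rho br F \<xi> \<eta> g \<longleftrightarrow>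
     contact_riemannian_lie_algebroid A m E Gam rho br F \<xi> \<eta> g \<and> killing_section Gam rho br g \<xi>"

definition levi_civita ::
  "('m \<Rightarrow> real) set \<Rightarrow> ('m \<Rightarrow> 'v::real_vector) set
   \<Rightarrow> (('m \<Rightarrow> 'v) \<Rightarrow> ('m \<Rightarrow> real) \<Rightarrow> ('m \<Rightarrow> real)) \<Rightarrow> (('m \<Rightarrow> 'v) \<Rightarrow> ('m \<Rightarrow> 'v) \<Rightarrow> ('m \<Rightarrow> 'v))
   \<Rightarrow> ('m \<Rightarrow> 'v \<Rightarrow> 'v \<Rightarrow> real) \<Rightarrow> (('m \<Rightarrow> 'v) \<Rightarrow> ('m \<Rightarrow> 'v) \<Rightarrow> ('m \<Rightarrow> 'v)) \<Rightarrow> bool" where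
  "levi_civita A Gam rho br g nabla \<longleftrightarrow>
     (\<forall>s1\<in>Gam. \<forall>s2\<in>Gam. nabla s1 s2 \<in> Gam) \<and>
     (\<forall>s\<in>Gam. \<forall>s'\<in>Gam. \<forall>t\<in>Gam.
        nabla (sadd s t) s' = sadd (nabla s s') (nabla t s') \<and>
        nabla s (sadd s' t) = sadd (nabla s s') (nabla s t)) \<and>
     (\<forall>f\<in>A. \<forall>s\<in>Gam. \<forall>s'\<in>Gam.
        nabla (fsmul f s) s' = fsmul f (nabla s s') \<and>
        nabla s (fsmul f s') = sadd (fsmul f (nabla s s')) (fsmul (rho s f) s')) \<and>
     (\<forall>s1\<in>Gam. \<forall>s2\<in>Gam. (\<lambda>x. nabla s1 s2 x - nabla s2 s1 x) = br s1 s2) \<and>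
     (\<forall>s\<in>Gam. \<forall>s1\<in>Gam. \<forall>s2\<in>Gam.
        rho s (form2 g s1 s2) = (\<lambda>x. form2 g (nabla s s1) s2 x + form2 g s1 (nabla s s2) x))"

end

theory Submission
  imports Defs
begin

text \<open>
  For the Levi-Civita connection, \<open>\<xi>\<close> is Killing exactly when \<open>s \<mapsto> \<nabla>\<^sub>s\<xi>\<close> is skew with
  respect to \<open>g\<^sub>E\<close>, while torsion-freeness and metricity turn \<open>d\<^sub>E\<eta> = \<Omega>\<^sub>E\<close> (with
  \<open>\<eta> = g\<^sub>E(\<cdot>,\<xi>)\<close>) into the statement that the antisymmetric part of \<open>\<nabla>\<xi>\<close> is \<open>-F\<^sub>E\<close>.
  Since \<open>F\<^sub>E\<close> is itself skew, \<open>\<nabla>\<xi>\<close> is skew if and only if it equals \<open>-F\<^sub>E\<close>.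
\<close>

locale almost_contact_metric_space =
  fixes V :: "'v::real_vector set" and F :: "'v \<Rightarrow> 'v" and \<xi> :: 'v
    and \<eta> :: "'v \<Rightarrow> real" and g :: "'v \<Rightarrow> 'v \<Rightarrow> real"
  assumes subspace: "subspace V" and xi_in: "\<xi> \<in> V"
    and F_add: "\<And>v w. v \<in> V \<Longrightarrow> w \<in> V \<Longrightarrow> F (v + w) = F v + F w"
    and F_scale: "\<And>v c. v \<in> V \<Longrightarrow> F (c *\<^sub>R v) = c *\<^sub>R F v"
    and F_in: "\<And>v. v \<in> V \<Longrightarrow> F v \<in> V"
    and eta_scale: "\<And>v c. v \<in> V \<Longrightarrow> \<eta> (c *\<^sub>R v) = c * \<eta> v"
    and g_sym: "\<And>u v. u \<in> V \<Longrightarrow> v \<in> V \<Longrightarrow> g u v = g v u"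
    and g_add: "\<And>u v w. u \<in> V \<Longrightarrow> v \<in> V \<Longrightarrow> w \<in> V \<Longrightarrow> g (u + v) w = g u w + g v w"
    and g_scale: "\<And>u w c. u \<in> V \<Longrightarrow> w \<in> V \<Longrightarrow> g (c *\<^sub>R u) w = c * g u w"
    and F_F: "\<And>v. v \<in> V \<Longrightarrow> F (F v) = - v + \<eta> v *\<^sub>R \<xi>"
    and eta_xi: "\<eta> \<xi> = 1"
    and g_F_F: "\<And>v w. v \<in> V \<Longrightarrow> w \<in> V \<Longrightarrow> g (F v) (F w) = g v w - \<eta> v * \<eta> w"
begin

lemma xi_nonzero: "\<xi> \<noteq> 0"
  using eta_scale[OF xi_in, of 0] eta_xi by auto

lemma F_zero: "F 0 = 0"
  using F_scale[OF xi_in, of 0] by simp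

lemma F_xi: "F \<xi> = 0"
proof -
  define a where "a = F \<xi>"
  have a_in: "a \<in> V" unfolding a_def using F_in xi_in .
  have Fa: "F a = 0" unfolding a_def using F_F[OF xi_in] eta_xi by simp
  have "F (F a) = - a + \<eta> a *\<^sub>R \<xi>" using F_F[OF a_in] .
  then have a_eq: "a = \<eta> a *\<^sub>R \<xi>" using Fa F_zero by (simp add: algebra_simps)
  then have "F a = \<eta> a *\<^sub>R a" using F_scale[OF xi_in, of "\<eta> a"] unfolding a_def by metis
  then have "(\<eta> a * \<eta> a) *\<^sub>R \<xi> = 0" using Fa a_eq by (metis scaleR_scaleR)
  then have "\<eta> a = 0" using xi_nonzero by simp
  then show ?thesis using a_eq a_def by simp
qed

lemma eta_F: "v \<in> V \<Longrightarrow> \<eta> (F v) = 0"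
proof -
  assume v: "v \<in> V"
  have "F (F (F v)) = F (- v) + \<eta> v *\<^sub>R F \<xi>"
    using F_F[OF v] F_add[of "- v" "\<eta> v *\<^sub>R \<xi>"] F_scale[OF xi_in] v xi_in subspace
    by (simp add: subspace_neg subspace_scale)
  also have "\<dots> = - F v" using F_scale[OF v, of "-1"] F_xi by simp
  finally have "\<eta> (F v) *\<^sub>R \<xi> = 0" using F_F[OF F_in[OF v]] by simp
  then show ?thesis using xi_nonzero by simp
qed

lemma g_xi: "v \<in> V \<Longrightarrow> g v \<xi> = \<eta> v"
proof -
  assume v: "v \<in> V"
  have "g (F v) 0 = 0"
    using g_sym[OF F_in[OF v] subspace_0[OF subspace]] g_scale[OF xi_in F_in[OF v], of 0] by simp
  then show ?thesis using g_F_F[OF v xi_in] F_xi eta_xi by simp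
qed

lemma F_skew: "v \<in> V \<Longrightarrow> w \<in> V \<Longrightarrow> g (F v) w = - g v (F w)"
proof -
  assume v: "v \<in> V" and w: "w \<in> V"
  have Fw: "F w \<in> V" using F_in[OF w] .
  have "g (F v) w = g (F (F v)) (F w)" using g_F_F[OF F_in[OF v] w] eta_F[OF v] by simp
  also have "\<dots> = g (- v) (F w) + g (\<eta> v *\<^sub>R \<xi>) (F w)"
    using F_F[OF v] g_add[of "- v" "\<eta> v *\<^sub>R \<xi>" "F w"] v xi_in Fw subspace
    by (simp add: subspace_neg subspace_scale)
  also have "\<dots> = - g v (F w)"
    using g_scale[OF v Fw, of "-1"] g_scale[OF xi_in Fw] g_sym[OF xi_in Fw] g_xi[OF Fw] eta_F[OF w]
    by simp
  finally show ?thesis .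
qed

end

lemma almost_contact_riemannian_fibre:
  assumes "almost_contact_riemannian A m E Gam F \<xi> \<eta> g"
  shows "almost_contact_metric_space (E x) (F x) (\<xi> x) (\<eta> x) (g x)"
  using assms unfolding almost_contact_riemannian_def vector_bundle_def
  by unfold_locales meson+

lemma vector_bundle_section_in: "vector_bundle A r E Gam \<Longrightarrow> s \<in> Gam \<Longrightarrow> s x \<in> E x"
  unfolding vector_bundle_def by blast

lemma vector_bundle_sections_span:
  "vector_bundle A r E Gam \<Longrightarrow> v \<in> E x \<Longrightarrow> \<exists>t\<in>Gam. t x = v"
  unfolding vector_bundle_def by blast

definition bundle_metric :: "('m \<Rightarrow> 'v::real_vector set) \<Rightarrow> ('m \<Rightarrow> 'v \<Rightarrow> 'v \<Rightarrow> real) \<Rightarrow> bool" where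
  "bundle_metric E g \<longleftrightarrow>
     (\<forall>x. subspace (E x)) \<and>
     (\<forall>x. \<forall>u\<in>E x. \<forall>v\<in>E x. \<forall>w\<in>E x. \<forall>c::real.
        g x u v = g x v u \<and> g x (u + v) w = g x u w + g x v w \<and> g x (c *\<^sub>R u) w = c * g x u w) \<and>
     (\<forall>x. \<forall>v\<in>E x. v \<noteq> 0 \<longrightarrow> g x v v > 0)"

lemma almost_contact_riemannian_bundle_metric:
  "almost_contact_riemannian A m E Gam F \<xi> \<eta> g \<Longrightarrow> bundle_metric E g"
  unfolding almost_contact_riemannian_def vector_bundle_def bundle_metric_def by meson

context
  fixes E :: "'m \<Rightarrow> 'v::real_vector set" and g :: "'m \<Rightarrow> 'v \<Rightarrow> 'v \<Rightarrow> real"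
  assumes metric: "bundle_metric E g"
begin

lemma bundle_metric_sym: "u \<in> E x \<Longrightarrow> v \<in> E x \<Longrightarrow> g x u v = g x v u"
  using metric unfolding bundle_metric_def by blast

lemma bundle_metric_add_left:
  "u \<in> E x \<Longrightarrow> v \<in> E x \<Longrightarrow> w \<in> E x \<Longrightarrow> g x (u + v) w = g x u w + g x v w"
  using metric unfolding bundle_metric_def by blast

lemma bundle_metric_fibre_diff: "u \<in> E x \<Longrightarrow> v \<in> E x \<Longrightarrow> u - v \<in> E x"
  using metric by (simp add: bundle_metric_def subspace_diff)

lemma bundle_metric_diff_left:
  assumes "u \<in> E x" "v \<in> E x" "w \<in> E x"
  shows "g x (u - v) w = g x u w - g x v w"
  using bundle_metric_add_left[OF bundle_metric_fibre_diff[OF assms(1,2)] assms(2,3)] by simp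

lemma bundle_metric_diff_right:
  assumes "u \<in> E x" "v \<in> E x" "w \<in> E x"
  shows "g x w (u - v) = g x w u - g x w v"
  using bundle_metric_diff_left[OF assms] bundle_metric_fibre_diff[OF assms(1,2)] assms
  by (simp add: bundle_metric_sym)

lemma bundle_metric_neg_left: "u \<in> E x \<Longrightarrow> w \<in> E x \<Longrightarrow> g x (- u) w = - g x u w"
  using metric unfolding bundle_metric_def by (metis mult_minus1 scaleR_minus1_left)

lemma bundle_metric_neg_right: "u \<in> E x \<Longrightarrow> w \<in> E x \<Longrightarrow> g x w (- u) = - g x w u"
  using bundle_metric_neg_left bundle_metric_sym metric
  by (metis bundle_metric_def subspace_neg)

lemma bundle_metric_nondegenerate:
  assumes u: "u \<in> E x" and span: "\<And>v. v \<in> E x \<Longrightarrow> \<exists>t\<in>Gam. t x = v"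
    and orth: "\<And>t. t \<in> Gam \<Longrightarrow> g x u (t x) = 0"
  shows "u = 0"
  using span[OF u] orth metric u unfolding bundle_metric_def by force

end

context
  fixes A Gam rho br g nabla
  assumes lc: "levi_civita A Gam rho br g nabla"
begin

lemma levi_civita_closed: "s1 \<in> Gam \<Longrightarrow> s2 \<in> Gam \<Longrightarrow> nabla s1 s2 \<in> Gam"
  using lc unfolding levi_civita_def by blast

lemma levi_civita_torsion_free_at:
  "s1 \<in> Gam \<Longrightarrow> s2 \<in> Gam \<Longrightarrow> br s1 s2 x = nabla s1 s2 x - nabla s2 s1 x"
  using lc unfolding levi_civita_def by metis

lemma levi_civita_metric_at:
  "s \<in> Gam \<Longrightarrow> s1 \<in> Gam \<Longrightarrow> s2 \<in> Gam \<Longrightarrow>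
   rho s (form2 g s1 s2) x = g x (nabla s s1 x) (s2 x) + g x (s1 x) (nabla s s2 x)"
  using lc unfolding levi_civita_def form2_def by metis

end

lemma killing_section_iff_nabla_skew:
  assumes lc: "levi_civita A Gam rho br g nabla" and metric: "bundle_metric E g"
    and vb: "vector_bundle A r E Gam" and xi: "\<xi> \<in> Gam"
  shows "killing_section Gam rho br g \<xi> \<longleftrightarrow>
    (\<forall>s1\<in>Gam. \<forall>s2\<in>Gam. \<forall>x. g x (nabla s1 \<xi> x) (s2 x) + g x (s1 x) (nabla s2 \<xi> x) = 0)"
proof -
  note sections = vector_bundle_section_in[OF vb]
  have "rho \<xi> (form2 g s1 s2) x - form2 g (br \<xi> s1) s2 x - form2 g s1 (br \<xi> s2) x
      = g x (nabla s1 \<xi> x) (s2 x) + g x (s1 x) (nabla s2 \<xi> x)"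
    if s1: "s1 \<in> Gam" and s2: "s2 \<in> Gam" for s1 s2 x
  proof -
    have in_E: "nabla s t x \<in> E x" if "s \<in> Gam" "t \<in> Gam" for s t
      using sections levi_civita_closed[OF lc] that by blast
    have "form2 g (br \<xi> s1) s2 x = g x (nabla \<xi> s1 x) (s2 x) - g x (nabla s1 \<xi> x) (s2 x)"
      using levi_civita_torsion_free_at[OF lc xi s1, of x]
        bundle_metric_diff_left[OF metric in_E[OF xi s1] in_E[OF s1 xi] sections[OF s2]]
      by (simp add: form2_def)
    moreover have "form2 g s1 (br \<xi> s2) x = g x (s1 x) (nabla \<xi> s2 x) - g x (s1 x) (nabla s2 \<xi> x)"
      using levi_civita_torsion_free_at[OF lc xi s2, of x]
        bundle_metric_diff_right[OF metric in_E[OF xi s2] in_E[OF s2 xi] sections[OF s1]]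
      by (simp add: form2_def)
    ultimately show ?thesis using levi_civita_metric_at[OF lc xi s1 s2, of x] by linarith
  qed
  then show ?thesis unfolding killing_section_def by simp
qed

lemma dE1_metric_dual_eq_nabla:
  assumes lc: "levi_civita A Gam rho br g nabla" and metric: "bundle_metric E g"
    and vb: "vector_bundle A r E Gam" and xi: "\<xi> \<in> Gam"
    and eta: "\<And>x v. v \<in> E x \<Longrightarrow> \<eta> x v = g x v (\<xi> x)"
    and s1: "s1 \<in> Gam" and s2: "s2 \<in> Gam"
  shows "2 * dE1 rho br \<eta> s1 s2 x = g x (nabla s1 \<xi> x) (s2 x) - g x (s1 x) (nabla s2 \<xi> x)"
proof -
  note sections = vector_bundle_section_in[OF vb]
  have form1_eta: "form1 \<eta> s = form2 g s \<xi>" if "s \<in> Gam" for s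
    using eta sections that by (auto simp: form1_def form2_def)
  have in_E: "nabla s t x \<in> E x" if "s \<in> Gam" "t \<in> Gam" for s t
    using sections levi_civita_closed[OF lc] that by blast
  have "\<eta> x (br s1 s2 x) = g x (nabla s1 s2 x) (\<xi> x) - g x (nabla s2 s1 x) (\<xi> x)"
    using levi_civita_torsion_free_at[OF lc s1 s2, of x]
      eta[OF bundle_metric_fibre_diff[OF metric in_E[OF s1 s2] in_E[OF s2 s1]]]
      bundle_metric_diff_left[OF metric in_E[OF s1 s2] in_E[OF s2 s1] sections[OF xi]]
    by simp
  moreover have "2 * dE1 rho br \<eta> s1 s2 x
      = rho s1 (form2 g s2 \<xi>) x - rho s2 (form2 g s1 \<xi>) x - \<eta> x (br s1 s2 x)"
    by (simp add: dE1_def form1_eta s1 s2 form1_def[of \<eta> "br s1 s2"])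
  moreover have "g x (s2 x) (nabla s1 \<xi> x) = g x (nabla s1 \<xi> x) (s2 x)"
    using bundle_metric_sym[OF metric] in_E[OF s1 xi] sections[OF s2] by blast
  ultimately show ?thesis
    using levi_civita_metric_at[OF lc s1 s2 xi, of x] levi_civita_metric_at[OF lc s2 s1 xi, of x]
    by linarith
qed

lemma skew_iff_eq_neg_of_antisym_part:
  assumes metric: "bundle_metric E g"
    and vb: "vector_bundle A r E Gam"
    and D_in: "\<And>s x. s \<in> Gam \<Longrightarrow> D s x \<in> E x"
    and F_in: "\<And>x v. v \<in> E x \<Longrightarrow> F x v \<in> E x"
    and F_skew: "\<And>x v w. v \<in> E x \<Longrightarrow> w \<in> E x \<Longrightarrow> g x (F x v) w = - g x v (F x w)"
    and antisym: "\<And>s t x. s \<in> Gam \<Longrightarrow> t \<in> Gam \<Longrightarrow>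
      2 * g x (s x) (F x (t x)) = g x (D s x) (t x) - g x (s x) (D t x)"
  shows "(\<forall>s\<in>Gam. \<forall>t\<in>Gam. \<forall>x. g x (D s x) (t x) + g x (s x) (D t x) = 0) \<longleftrightarrow>
         (\<forall>s\<in>Gam. D s = (\<lambda>x. - F x (s x)))"
proof -
  note sections = vector_bundle_section_in[OF vb]
  note sections_span = vector_bundle_sections_span[OF vb]
  show ?thesis
  proof
    assume skew: "\<forall>s\<in>Gam. \<forall>t\<in>Gam. \<forall>x. g x (D s x) (t x) + g x (s x) (D t x) = 0"
    show "\<forall>s\<in>Gam. D s = (\<lambda>x. - F x (s x))"
    proof (intro ballI ext)
      fix s x assume s: "s \<in> Gam"
      have u_in: "D s x + F x (s x) \<in> E x"
        using metric D_in[OF s] F_in[OF sections[OF s]] by (simp add: bundle_metric_def subspace_add)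
      have "g x (D s x + F x (s x)) (t x) = 0" if t: "t \<in> Gam" for t
      proof -
        have "g x (D s x) (t x) + g x (s x) (D t x) = 0" using skew s t by blast
        then have "g x (D s x) (t x) = - g x (F x (s x)) (t x)"
          using antisym[OF s t, of x] F_skew[OF sections[OF s, of x] sections[OF t, of x]] by linarith
        then show ?thesis
          using bundle_metric_add_left[OF metric D_in[OF s] F_in[OF sections[OF s]] sections[OF t]]
          by simp
      qed
      then have "D s x + F x (s x) = 0"
        using bundle_metric_nondegenerate[OF metric u_in sections_span] by blast
      then show "D s x = - F x (s x)" by (simp add: eq_neg_iff_add_eq_0)
    qed
  next
    assume D_eq: "\<forall>s\<in>Gam. D s = (\<lambda>x. - F x (s x))"
    show "\<forall>s\<in>Gam. \<forall>t\<in>Gam. \<forall>x. g x (D s x) (t x) + g x (s x) (D t x) = 0"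
    proof (intro ballI allI)
      fix s t x assume s: "s \<in> Gam" and t: "t \<in> Gam"
      show "g x (D s x) (t x) + g x (s x) (D t x) = 0"
        using F_skew[OF sections[OF s, of x] sections[OF t, of x]] D_eq s t
          bundle_metric_neg_left[OF metric F_in[OF sections[OF s]] sections[OF t]]
          bundle_metric_neg_right[OF metric F_in[OF sections[OF t]] sections[OF s]]
        by simp
    qed
  qed
qed

theorem proposition4p6:
  fixes A :: "('m \<Rightarrow> real) set" and E :: "'m \<Rightarrow> 'v::euclidean_space set"
    and Gam :: "('m \<Rightarrow> 'v) set"
    and rho :: "('m \<Rightarrow> 'v) \<Rightarrow> ('m \<Rightarrow> real) \<Rightarrow> ('m \<Rightarrow> real)"
    and br :: "('m \<Rightarrow> 'v) \<Rightarrow> ('m \<Rightarrow> 'v) \<Rightarrow> ('m \<Rightarrow> 'v)"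
    and F :: "'m \<Rightarrow> 'v \<Rightarrow> 'v" and \<xi> :: "'m \<Rightarrow> 'v" and \<eta> :: "'m \<Rightarrow> 'v \<Rightarrow> real"
    and g :: "'m \<Rightarrow> 'v \<Rightarrow> 'v \<Rightarrow> real"
    and nabla :: "('m \<Rightarrow> 'v) \<Rightarrow> ('m \<Rightarrow> 'v) \<Rightarrow> ('m \<Rightarrow> 'v)"
    and m :: nat
  assumes "contact_riemannian_lie_algebroid A m E Gam rho br F \<xi> \<eta> g"
    and "levi_civita A Gam rho br g nabla"
  shows "K_contact A m E Gam rho br F \<xi> \<eta> g \<longleftrightarrow>
         (\<forall>s\<in>Gam. nabla s \<xi> = (\<lambda>x. - F x (s x)))"
proof -
  have ac: "almost_contact_riemannian A m E Gam F \<xi> \<eta> g"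
    and contact: "\<And>s1 s2. s1 \<in> Gam \<Longrightarrow> s2 \<in> Gam \<Longrightarrow> dE1 rho br \<eta> s1 s2 = fundamental_form F g s1 s2"
    using assms(1) unfolding contact_riemannian_lie_algebroid_def by blast+
  have metric: "bundle_metric E g" using almost_contact_riemannian_bundle_metric[OF ac] .
  interpret fibre: almost_contact_metric_space "E x" "F x" "\<xi> x" "\<eta> x" "g x" for x
    using almost_contact_riemannian_fibre[OF ac] .
  have vb: "vector_bundle A (2 * m + 1) E Gam" and xi: "\<xi> \<in> Gam"
    using ac unfolding almost_contact_riemannian_def by blast+
  have eta: "\<And>x v. v \<in> E x \<Longrightarrow> \<eta> x v = g x v (\<xi> x)" using fibre.g_xi by simp
  have antisym: "2 * g x (s x) (F x (t x)) = g x (nabla s \<xi> x) (t x) - g x (s x) (nabla t \<xi> x)"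
    if "s \<in> Gam" "t \<in> Gam" for s t x
    using dE1_metric_dual_eq_nabla[OF assms(2) metric vb xi eta that]
      contact[OF that] by (simp add: fundamental_form_def)
  have nabla_xi_in: "\<And>s x. s \<in> Gam \<Longrightarrow> nabla s \<xi> x \<in> E x"
    using vector_bundle_section_in[OF vb] levi_civita_closed[OF assms(2)] xi by blast
  have "killing_section Gam rho br g \<xi> \<longleftrightarrow> (\<forall>s\<in>Gam. nabla s \<xi> = (\<lambda>x. - F x (s x)))"
    unfolding killing_section_iff_nabla_skew[OF assms(2) metric vb xi]
    using skew_iff_eq_neg_of_antisym_part[where E = E and g = g and F = F and D = "\<lambda>s. nabla s \<xi>",
        OF metric vb nabla_xi_in fibre.F_in fibre.F_skew antisym] .
  then show ?thesis using assms(1) unfolding K_contact_def by blast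
qed

end
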